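(* Let $\theta:\Omega A\to\Omega B$ be a map of differential graded algebras, $M$ a right $A$-module, $\nabla_0:\mathrm{Hom}_A(\Omega^1A,M)\to M$ a hom-connection with curvature $F$, and let $\nabla_0^\theta:\mathrm{Hom}_B(\Omega^1B,\mathrm{Hom}_A(B,M))\to\mathrm{Hom}_A(B,M)$ be the induced hom-connection, $\nabla_0^\theta(f)(b)=\nabla_0(f\circ\ell_b\circ\theta)-f(db)$ (with $f\in\mathrm{Hom}_A(\Omega^1B,M)$, $\ell_b(\omega)=b\omega$), with curvature $F^\theta$. Then for all $f\in\mathrm{Hom}_B(\Omega^2B,\mathrm{Hom}_A(B,M))\cong\mathrm{Hom}_A(\Omega^2B,M)$ and all $b\in B$, $$F^\theta(f)(b)=F(fb\circ\theta),$$ where $fb\in\mathrm{Hom}_A(\Omega^2B,M)$ is $\omega\mapsto f(b\omega)$ and $fb\circ\theta$ is restricted to $\Omega^2A$. In particular, if $\nabla_0$ is flat, then so is $\nabla_0^\theta$.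
   Context: All algebras are associative and unital over a field $k$. A differential graded algebra $\Omega A=\bigoplus_{n\ge0}\Omega^nA$ over $A=\Omega^0A$ has a degree-one differential $d$, $d^2=0$, with the graded Leibniz rule; a map of differential graded algebras is a degree-preserving unital algebra map commuting with $d$. $B$ and all $\Omega^nB$ are $A$-bimodules via $\theta$. $\mathrm{Hom}_A$ denotes right $A$-linear maps; $\mathrm{Hom}_A(B,M)$ is a right $B$-module by $(gb)(b')=g(bb')$, and $\mathrm{Hom}_B(\Omega^nB,\mathrm{Hom}_A(B,M))\cong\mathrm{Hom}_A(\Omega^nB,M)$ via $f\mapsto(\omega\mapsto f(\omega)(1))$. For a right $A$-module $P$, $\mathrm{Hom}_A(\Omega^1A,P)$ is a right $A$-module via $(fa)(\omega)=f(a\omega)$, and a hom-connection on $P$ is a $k$-linear $\nabla_0:\mathrm{Hom}_A(\Omega^1A,P)\to P$ with $\nabla_0(fa)=\nabla_0(f)a+f(da)$ (analogously over $\Omega B$). For $\omega\in\Omega^nA$ and $f\in\mathrm{Hom}_A(\Omega^{n+m}A,P)$, $(f\omega)(\omega')=f(\omega\omega')$. Given a hom-connection $\nabla_0$, its extension $\nabla_1:\mathrm{Hom}_A(\Omega^2A,P)\to\mathrm{Hom}_A(\Omega^1A,P)$ is $\nabla_1(f)(\omega)=\nabla_0(f\omega)+f(d\omega)$, its curvature is $F=\nabla_0\circ\nabla_1$ (identifying $\mathrm{Hom}_A(A,P)\cong P$), and it is flat if $F=0$; the same definitions apply over $\Omega B$ to $\nabla_0^\theta$. *)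

theory Defs
  imports Main "HOL-Library.Function_Algebras"
begin

text \<open>A differential graded algebra over a field k is modelled by a ring_1 type 'a (the total
algebra, the direct sum of the graded pieces), a grading (grade D n = Omega^n), a differential
and the structure map k -> Omega^0 (central unital ring map) giving the k-algebra structure.\<close>

record ('k, 'a) dga =
  grade :: "nat \<Rightarrow> 'a set"
  dif   :: "'a \<Rightarrow> 'a"
  sc    :: "'k \<Rightarrow> 'a"

definition is_dga :: "('k::field, 'a::ring_1) dga \<Rightarrow> bool" where
  "is_dga D \<longleftrightarrow>
     (\<forall>n. 0 \<in> grade D n \<and> (\<forall>x\<in>grade D n. \<forall>y\<in>grade D n. x + y \<in> grade D n \<and> - x \<in> grade D n)) \<and>
     (\<forall>m n. \<forall>x\<in>grade D m. \<forall>y\<in>grade D n. x * y \<in> grade D (m + n)) \<and>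
     1 \<in> grade D 0 \<and>
     (\<forall>x. \<exists>!g. (\<forall>n. g n \<in> grade D n) \<and> finite {n. g n \<noteq> 0} \<and> x = (\<Sum>n | g n \<noteq> 0. g n)) \<and>
     (\<forall>c. sc D c \<in> grade D 0) \<and>
     (\<forall>c c'. sc D (c + c') = sc D c + sc D c' \<and> sc D (c * c') = sc D c * sc D c') \<and>
     sc D 1 = 1 \<and>
     (\<forall>c x. sc D c * x = x * sc D c) \<and>
     (\<forall>x y. dif D (x + y) = dif D x + dif D y) \<and>
     (\<forall>c x. dif D (sc D c * x) = sc D c * dif D x) \<and>
     (\<forall>n. \<forall>x\<in>grade D n. dif D x \<in> grade D (Suc n)) \<and>
     (\<forall>x. dif D (dif D x) = 0) \<and>
     (\<forall>m. \<forall>x\<in>grade D m. \<forall>y. dif D (x * y) = dif D x * y + (- 1) ^ m * x * dif D y)"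

definition is_dga_map :: "('k::field, 'a::ring_1) dga \<Rightarrow> ('k, 'b::ring_1) dga \<Rightarrow> ('a \<Rightarrow> 'b) \<Rightarrow> bool" where
  "is_dga_map DA DB \<theta> \<longleftrightarrow>
     (\<forall>x y. \<theta> (x + y) = \<theta> x + \<theta> y \<and> \<theta> (x * y) = \<theta> x * \<theta> y) \<and>
     \<theta> 1 = 1 \<and>
     (\<forall>c. \<theta> (sc DA c) = sc DB c) \<and>
     (\<forall>n. \<theta> ` grade DA n \<subseteq> grade DB n) \<and>
     (\<forall>x. \<theta> (dif DA x) = dif DB (\<theta> x))"

definition is_rmod :: "('k, 'a::ring_1) dga \<Rightarrow> 'p::ab_group_add set \<Rightarrow> ('p \<Rightarrow> 'a \<Rightarrow> 'p) \<Rightarrow> bool" where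
  "is_rmod D P act \<longleftrightarrow>
     0 \<in> P \<and> (\<forall>p\<in>P. \<forall>q\<in>P. p + q \<in> P \<and> - p \<in> P) \<and>
     (\<forall>p\<in>P. \<forall>a\<in>grade D 0. act p a \<in> P) \<and>
     (\<forall>p\<in>P. act p 1 = p) \<and>
     (\<forall>p\<in>P. \<forall>a\<in>grade D 0. \<forall>a'\<in>grade D 0. act (act p a) a' = act p (a * a')) \<and>
     (\<forall>p\<in>P. \<forall>q\<in>P. \<forall>a\<in>grade D 0. act (p + q) a = act p a + act q a) \<and>
     (\<forall>p\<in>P. \<forall>a\<in>grade D 0. \<forall>a'\<in>grade D 0. act p (a + a') = act p a + act p a')"

text \<open>Hom_A(Omega^n, P): right A-linear maps, represented extensionally (zero off Omega^n).\<close>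

definition hom :: "('k, 'a::ring_1) dga \<Rightarrow> 'p::ab_group_add set \<Rightarrow> ('p \<Rightarrow> 'a \<Rightarrow> 'p) \<Rightarrow> nat \<Rightarrow> ('a \<Rightarrow> 'p) set" where
  "hom D P act n = {f. (\<forall>x. x \<notin> grade D n \<longrightarrow> f x = 0) \<and> (\<forall>x\<in>grade D n. f x \<in> P) \<and>
     (\<forall>x\<in>grade D n. \<forall>y\<in>grade D n. f (x + y) = f x + f y) \<and>
     (\<forall>x\<in>grade D n. \<forall>a\<in>grade D 0. f (x * a) = act (f x) a)}"

text \<open>For omega and f in Hom(Omega^(n+m),P): (f omega)(omega') = f(omega omega'), an element of Hom(Omega^m,P).
In particular f a (a in A) is the right A-action on Hom(Omega^1,P).\<close>

definition homlmul :: "('k, 'a::ring_1) dga \<Rightarrow> nat \<Rightarrow> ('a \<Rightarrow> 'p::zero) \<Rightarrow> 'a \<Rightarrow> ('a \<Rightarrow> 'p)" where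
  "homlmul D m f \<omega> = (\<lambda>\<omega>'. if \<omega>' \<in> grade D m then f (\<omega> * \<omega>') else 0)"

definition is_hom_conn :: "('k, 'a::ring_1) dga \<Rightarrow> 'p::ab_group_add set \<Rightarrow> ('p \<Rightarrow> 'a \<Rightarrow> 'p) \<Rightarrow> (('a \<Rightarrow> 'p) \<Rightarrow> 'p) \<Rightarrow> bool" where
  "is_hom_conn D P act nabla \<longleftrightarrow>
     (\<forall>f\<in>hom D P act 1. nabla f \<in> P) \<and>
     (\<forall>f\<in>hom D P act 1. \<forall>g\<in>hom D P act 1. nabla (f + g) = nabla f + nabla g) \<and>
     (\<forall>f\<in>hom D P act 1. \<forall>c. nabla (homlmul D 1 f (sc D c)) = act (nabla f) (sc D c)) \<and>
     (\<forall>f\<in>hom D P act 1. \<forall>a\<in>grade D 0. nabla (homlmul D 1 f a) = act (nabla f) a + f (dif D a))"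

definition nabla1 :: "('k, 'a::ring_1) dga \<Rightarrow> (('a \<Rightarrow> 'p::ab_group_add) \<Rightarrow> 'p) \<Rightarrow> ('a \<Rightarrow> 'p) \<Rightarrow> ('a \<Rightarrow> 'p)" where
  "nabla1 D nabla f = (\<lambda>\<omega>. if \<omega> \<in> grade D 1 then nabla (homlmul D 1 f \<omega>) + f (dif D \<omega>) else 0)"

definition curvature :: "('k, 'a::ring_1) dga \<Rightarrow> (('a \<Rightarrow> 'p::ab_group_add) \<Rightarrow> 'p) \<Rightarrow> ('a \<Rightarrow> 'p) \<Rightarrow> 'p" where
  "curvature D nabla f = nabla (nabla1 D nabla f)"

definition flat :: "('k, 'a::ring_1) dga \<Rightarrow> 'p::ab_group_add set \<Rightarrow> ('p \<Rightarrow> 'a \<Rightarrow> 'p) \<Rightarrow> (('a \<Rightarrow> 'p) \<Rightarrow> 'p) \<Rightarrow> bool" where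
  "flat D P act nabla \<longleftrightarrow> (\<forall>f\<in>hom D P act 2. curvature D nabla f = 0)"

definition homAB :: "('k, 'a::ring_1) dga \<Rightarrow> ('k, 'b::ring_1) dga \<Rightarrow> ('a \<Rightarrow> 'b) \<Rightarrow> 'm::ab_group_add set \<Rightarrow> ('m \<Rightarrow> 'a \<Rightarrow> 'm) \<Rightarrow> ('b \<Rightarrow> 'm) set" where
  "homAB DA DB \<theta> M actM = {g. (\<forall>b. b \<notin> grade DB 0 \<longrightarrow> g b = 0) \<and> (\<forall>b\<in>grade DB 0. g b \<in> M) \<and>
     (\<forall>b\<in>grade DB 0. \<forall>b'\<in>grade DB 0. g (b + b') = g b + g b') \<and>
     (\<forall>b\<in>grade DB 0. \<forall>a\<in>grade DA 0. g (b * \<theta> a) = actM (g b) a)}"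

definition actAB :: "('k, 'b::ring_1) dga \<Rightarrow> ('b \<Rightarrow> 'm::zero) \<Rightarrow> 'b \<Rightarrow> ('b \<Rightarrow> 'm)" where
  "actAB DB g b = (\<lambda>b'. if b' \<in> grade DB 0 then g (b * b') else 0)"

text \<open>Induced hom-connection: nabla^theta(f)(b) = nabla(f o l_b o theta) - f(db), where f in
Hom_B(Omega^1 B, Hom_A(B,M)) is identified with omega |-> f(omega)(1) in Hom_A(Omega^1 B, M).\<close>

definition induced_conn :: "('k, 'a::ring_1) dga \<Rightarrow> ('k, 'b::ring_1) dga \<Rightarrow> ('a \<Rightarrow> 'b) \<Rightarrow>
    (('a \<Rightarrow> 'm::ab_group_add) \<Rightarrow> 'm) \<Rightarrow> ('b \<Rightarrow> ('b \<Rightarrow> 'm)) \<Rightarrow> ('b \<Rightarrow> 'm)" where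
  "induced_conn DA DB \<theta> nabla f = (\<lambda>b. if b \<in> grade DB 0 then
       nabla (\<lambda>\<omega>. if \<omega> \<in> grade DA 1 then f (b * \<theta> \<omega>) 1 else 0) - f (dif DB b) 1
     else 0)"

end

theory Submission
  imports Defs
begin

text \<open>Evaluating at \<open>1\<close> and restricting along \<open>\<theta>\<close> turns \<open>f\<close> and \<open>b\<close> into
\<open>k = fb\<circ>\<theta> \<in> Hom_A(\<Omega>\<^sup>2A, M)\<close>. By the Leibniz rule for \<open>d(b \<theta>(\<omega>))\<close>, the restriction of
\<open>(\<nabla>\<^sub>1\<^sup>\<theta> f) b\<close> is \<open>\<nabla>\<^sub>1 k + q\<close> with \<open>q = (f db)\<circ>\<theta>\<close>, whereas the correction term
\<open>(\<nabla>\<^sub>1\<^sup>\<theta> f)(db)\<close> in \<open>\<nabla>\<^sub>0\<^sup>\<theta>\<close> equals \<open>\<nabla>\<^sub>0 q\<close> because \<open>d\<^sup>2 = 0\<close>. Additivity of \<open>\<nabla>\<^sub>0\<close>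
cancels the two \<open>q\<close>-terms, leaving \<open>F\<^sup>\<theta>(f)(b) = \<nabla>\<^sub>0(\<nabla>\<^sub>1 k) = F(k)\<close>.\<close>

lemma
  assumes "is_dga D"
  shows dga_zero_mem: "0 \<in> grade D n"
    and dga_add_mem: "x \<in> grade D n \<Longrightarrow> y \<in> grade D n \<Longrightarrow> x + y \<in> grade D n"
    and dga_uminus_mem: "x \<in> grade D n \<Longrightarrow> - x \<in> grade D n"
    and dga_mult_mem: "x \<in> grade D m \<Longrightarrow> y \<in> grade D n \<Longrightarrow> x * y \<in> grade D (m + n)"
    and dga_one_mem: "1 \<in> grade D 0"
    and dga_dif_add: "dif D (x + y) = dif D x + dif D y"
    and dga_dif_mem: "x \<in> grade D n \<Longrightarrow> dif D x \<in> grade D (Suc n)"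
    and dga_dif_dif: "dif D (dif D x) = 0"
    and dga_dif_mult: "x \<in> grade D m \<Longrightarrow> dif D (x * y) = dif D x * y + (- 1) ^ m * x * dif D y"
  using assms unfolding is_dga_def by (simp_all add: Ball_def)

lemma dga_dif_one: "is_dga D \<Longrightarrow> dif D 1 = 0"
  using dga_dif_mult[of D 1 0 1] dga_one_mem[of D] by simp

lemma
  assumes "is_dga_map DA DB \<theta>"
  shows dga_map_add: "\<theta> (x + y) = \<theta> x + \<theta> y"
    and dga_map_mult: "\<theta> (x * y) = \<theta> x * \<theta> y"
    and dga_map_mem: "x \<in> grade DA n \<Longrightarrow> \<theta> x \<in> grade DB n"
    and dga_map_dif: "\<theta> (dif DA x) = dif DB (\<theta> x)"
  using assms unfolding is_dga_map_def by blast+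

lemma
  assumes "is_rmod D P act"
  shows rmod_add_mem: "p \<in> P \<Longrightarrow> q \<in> P \<Longrightarrow> p + q \<in> P"
    and rmod_act_add: "p \<in> P \<Longrightarrow> q \<in> P \<Longrightarrow> a \<in> grade D 0 \<Longrightarrow> act (p + q) a = act p a + act q a"
  using assms unfolding is_rmod_def by (simp_all add: Ball_def)

lemma
  assumes "f \<in> hom D P act n"
  shows hom_mem: "x \<in> grade D n \<Longrightarrow> f x \<in> P"
    and hom_add: "x \<in> grade D n \<Longrightarrow> y \<in> grade D n \<Longrightarrow> f (x + y) = f x + f y"
    and hom_right_linear: "x \<in> grade D n \<Longrightarrow> a \<in> grade D 0 \<Longrightarrow> f (x * a) = act (f x) a"
  using assms unfolding hom_def by (simp_all add: Ball_def)

lemma hom_zero: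
  assumes "is_dga D" "f \<in> hom D P act n"
  shows "f 0 = 0"
  using hom_add[OF assms(2) dga_zero_mem dga_zero_mem] assms(1) by simp

lemma hom_uminus:
  assumes "is_dga D" "f \<in> hom D P act n" "x \<in> grade D n"
  shows "f (- x) = - f x"
  using hom_add[OF assms(2) assms(3) dga_uminus_mem[OF assms(1,3)]] hom_zero[OF assms(1,2)]
  by (simp add: eq_neg_iff_add_eq_0 add.commute)

lemma
  assumes "is_hom_conn D P act nabla" "f \<in> hom D P act 1"
  shows hom_conn_mem: "nabla f \<in> P"
    and hom_conn_add: "g \<in> hom D P act 1 \<Longrightarrow> nabla (f + g) = nabla f + nabla g"
    and hom_conn_Leibniz: "a \<in> grade D 0 \<Longrightarrow> nabla (homlmul D 1 f a) = act (nabla f) a + f (dif D a)"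
  using assms unfolding is_hom_conn_def by (simp_all add: Ball_def)

lemma
  assumes "g \<in> homAB DA DB \<theta> M actM" "b \<in> grade DB 0"
  shows homAB_mem: "g b \<in> M"
    and homAB_right_linear: "a \<in> grade DA 0 \<Longrightarrow> g (b * \<theta> a) = actM (g b) a"
  using assms unfolding homAB_def by blast+

lemma homlmul_hom:
  assumes D: "is_dga D" and k: "k \<in> hom D P act (n + m)" and w: "w \<in> grade D n"
  shows "homlmul D m k w \<in> hom D P act m"
proof -
  have wx: "w * x \<in> grade D (n + m)" if "x \<in> grade D m" for x
    using dga_mult_mem[OF D w that] .
  show ?thesis unfolding hom_def homlmul_def
  proof (intro CollectI conjI ballI allI impI)
    fix x y assume x: "x \<in> grade D m" and y: "y \<in> grade D m"
    show "(if x + y \<in> grade D m then k (w * (x + y)) else 0) =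
          (if x \<in> grade D m then k (w * x) else 0) + (if y \<in> grade D m then k (w * y) else 0)"
      using x y wx dga_add_mem[OF D x y] hom_add[OF k] by (simp add: distrib_left)
  next
    fix x a assume x: "x \<in> grade D m" and a: "a \<in> grade D 0"
    show "(if x * a \<in> grade D m then k (w * (x * a)) else 0)
          = act (if x \<in> grade D m then k (w * x) else 0) a"
      using x dga_mult_mem[OF D x a] hom_right_linear[OF k wx[OF x] a] by (simp add: mult.assoc)
  qed (use wx hom_mem[OF k] in auto)
qed

lemma homlmul_homlmul:
  assumes D: "is_dga D" and y: "y \<in> grade D n"
  shows "homlmul D m (homlmul D (n + m) k x) y = homlmul D m k (x * y)"
  using dga_mult_mem[OF D y] by (auto simp: homlmul_def mult.assoc)

lemma nabla1_right_linear:
  assumes D: "is_dga D" and R: "is_rmod D P act" and H: "is_hom_conn D P act nabla"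
    and k: "k \<in> hom D P act 2" and x: "x \<in> grade D 1" and a: "a \<in> grade D 0"
  shows "nabla1 D nabla k (x * a) = act (nabla1 D nabla k x) a"
proof -
  have k': "k \<in> hom D P act (1 + 1)" using k by (simp only: one_add_one)
  have kx: "homlmul D 1 k x \<in> hom D P act 1" using homlmul_hom[OF D k' x] .
  have dx: "dif D x \<in> grade D 2" using dga_dif_mem[OF D x] by (simp add: numeral_2_eq_2)
  have xda: "x * dif D a \<in> grade D 2"
    using dga_mult_mem[OF D x dga_dif_mem[OF D a]] by (simp add: numeral_2_eq_2)
  have dxa: "dif D x * a \<in> grade D 2" using dga_mult_mem[OF D dx a] by simp
  have "k (dif D (x * a)) = k (dif D x * a + - (x * dif D a))"
    using dga_dif_mult[OF D x] by simp
  also have "\<dots> = act (k (dif D x)) a - k (x * dif D a)"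
    using hom_add[OF k dxa dga_uminus_mem[OF D xda]] hom_uminus[OF D k xda] hom_right_linear[OF k dx a]
    by simp
  finally have k_dxa: "k (dif D (x * a)) = act (k (dif D x)) a - k (x * dif D a)" .
  have "nabla (homlmul D 1 k (x * a)) = nabla (homlmul D 1 (homlmul D 1 k x) a)"
    using homlmul_homlmul[OF D a, of 1 k x] by simp
  also have "\<dots> = act (nabla (homlmul D 1 k x)) a + k (x * dif D a)"
    using hom_conn_Leibniz[OF H kx a] dga_dif_mem[OF D a] by (simp add: homlmul_def)
  finally show ?thesis
    using x dga_mult_mem[OF D x a] k_dxa rmod_act_add[OF R hom_conn_mem[OF H kx] hom_mem[OF k dx] a]
    by (simp add: nabla1_def)
qed

lemma nabla1_hom:
  assumes D: "is_dga D" and R: "is_rmod D P act" and H: "is_hom_conn D P act nabla"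
    and k: "k \<in> hom D P act 2"
  shows "nabla1 D nabla k \<in> hom D P act 1"
proof -
  have k': "k \<in> hom D P act (1 + 1)" using k by (simp only: one_add_one)
  have dx: "dif D x \<in> grade D 2" if "x \<in> grade D 1" for x
    using dga_dif_mem[OF D that] by (simp add: numeral_2_eq_2)
  have homlmul_add: "homlmul D 1 k (x + y) = homlmul D 1 k x + homlmul D 1 k y"
    if "x \<in> grade D 1" "y \<in> grade D 1" for x y
    using that dga_mult_mem[OF D that(1), of _ 1] dga_mult_mem[OF D that(2), of _ 1] hom_add[OF k]
    by (auto simp: homlmul_def distrib_right numeral_2_eq_2)
  show ?thesis unfolding hom_def
  proof (intro CollectI conjI ballI allI impI)
    fix x assume "x \<in> grade D 1"
    then show "nabla1 D nabla k x \<in> P"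
      using rmod_add_mem[OF R hom_conn_mem[OF H homlmul_hom[OF D k']] hom_mem[OF k dx]]
      by (simp add: nabla1_def)
  next
    fix x y assume x: "x \<in> grade D 1" and y: "y \<in> grade D 1"
    then show "nabla1 D nabla k (x + y) = nabla1 D nabla k x + nabla1 D nabla k y"
      using dga_add_mem[OF D x y] homlmul_add
        hom_conn_add[OF H homlmul_hom[OF D k' x] homlmul_hom[OF D k' y]]
        dga_dif_add[OF D] hom_add[OF k dx dx]
      by (simp add: nabla1_def algebra_simps)
  next
    fix x a assume "x \<in> grade D 1" "a \<in> grade D 0"
    then show "nabla1 D nabla k (x * a) = act (nabla1 D nabla k x) a"
      using nabla1_right_linear[OF D R H k] by blast
  qed (simp add: nabla1_def)
qed

text \<open>\<open>pullback DA \<theta> m f c\<close> is the map \<open>fc\<circ>\<theta>\<close> of the paper on \<open>\<Omega>\<^sup>mA\<close>, with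
\<open>f \<in> Hom_B(\<Omega>\<^sup>nB, Hom_A(B,M))\<close> read in \<open>Hom_A(\<Omega>\<^sup>nB, M)\<close> by evaluation at \<open>1\<close>.\<close>

definition pullback ::
    "('k, 'a::ring_1) dga \<Rightarrow> ('a \<Rightarrow> 'b::ring_1) \<Rightarrow> nat \<Rightarrow> ('b \<Rightarrow> 'b \<Rightarrow> 'm::zero) \<Rightarrow> 'b \<Rightarrow> 'a \<Rightarrow> 'm"
  where "pullback DA \<theta> m f c = (\<lambda>\<omega>. if \<omega> \<in> grade DA m then f (c * \<theta> \<omega>) 1 else 0)"

lemma pullback_hom:
  assumes DA: "is_dga DA" and DB: "is_dga DB" and T: "is_dga_map DA DB \<theta>"
    and f: "f \<in> hom DB (homAB DA DB \<theta> M actM) (actAB DB) (n + m)" and c: "c \<in> grade DB n"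
  shows "pullback DA \<theta> m f c \<in> hom DA M actM m"
proof -
  have one: "1 \<in> grade DB 0" using dga_one_mem[OF DB] .
  have c\<theta>: "c * \<theta> x \<in> grade DB (n + m)" if "x \<in> grade DA m" for x
    using dga_mult_mem[OF DB c dga_map_mem[OF T that]] .
  show ?thesis unfolding hom_def
  proof (intro CollectI conjI ballI allI impI)
    fix x assume x: "x \<in> grade DA m"
    show "pullback DA \<theta> m f c x \<in> M"
      using x homAB_mem[OF hom_mem[OF f c\<theta>[OF x]] one] by (simp add: pullback_def)
    fix y assume y: "y \<in> grade DA m"
    show "pullback DA \<theta> m f c (x + y) = pullback DA \<theta> m f c x + pullback DA \<theta> m f c y"
      using x y dga_add_mem[OF DA x y] hom_add[OF f c\<theta>[OF x] c\<theta>[OF y]] dga_map_add[OF T]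
      by (simp add: pullback_def distrib_left)
  next
    fix x a assume x: "x \<in> grade DA m" and a: "a \<in> grade DA 0"
    have "f (c * \<theta> (x * a)) 1 = actAB DB (f (c * \<theta> x)) (\<theta> a) 1"
      using hom_right_linear[OF f c\<theta>[OF x] dga_map_mem[OF T a]] dga_map_mult[OF T]
      by (simp add: mult.assoc)
    also have "\<dots> = actM (f (c * \<theta> x) 1) a"
      using homAB_right_linear[OF hom_mem[OF f c\<theta>[OF x]] one a] one by (simp add: actAB_def)
    finally show "pullback DA \<theta> m f c (x * a) = actM (pullback DA \<theta> m f c x) a"
      using x dga_mult_mem[OF DA x a] by (simp add: pullback_def)
  qed (simp add: pullback_def)
qed

lemma induced_conn_eq:
  "b \<in> grade DB 0 \<Longrightarrow>
     induced_conn DA DB \<theta> nabla f b = nabla (pullback DA \<theta> 1 f b) - f (dif DB b) 1"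
  by (simp add: induced_conn_def pullback_def)

lemma induced_conn_homlmul_one:
  assumes DB: "is_dga DB" and T: "is_dga_map DA DB \<theta>"
    and f: "f \<in> hom DB P act 2" and c: "c \<in> grade DB 1"
  shows "induced_conn DA DB \<theta> nabla (homlmul DB 1 f c) 1 = nabla (pullback DA \<theta> 1 f c)"
proof -
  have "pullback DA \<theta> 1 (homlmul DB 1 f c) 1 = pullback DA \<theta> 1 f c"
    using dga_map_mem[OF T] by (auto simp: pullback_def homlmul_def)
  moreover have "homlmul DB 1 f c (dif DB 1) 1 = 0"
    using dga_dif_one[OF DB] dga_zero_mem[OF DB, of 1] hom_zero[OF DB f] by (simp add: homlmul_def)
  ultimately show ?thesis
    by (simp add: induced_conn_eq[OF dga_one_mem[OF DB]])
qed

lemma pullback_nabla1_induced_conn: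
  assumes DA: "is_dga DA" and DB: "is_dga DB" and T: "is_dga_map DA DB \<theta>"
    and f: "f \<in> hom DB P act 2" and b: "b \<in> grade DB 0"
  shows "pullback DA \<theta> 1 (nabla1 DB (induced_conn DA DB \<theta> nabla) f) b
           = nabla1 DA nabla (pullback DA \<theta> 2 f b) + pullback DA \<theta> 1 f (dif DB b)"
proof
  fix w
  show "pullback DA \<theta> 1 (nabla1 DB (induced_conn DA DB \<theta> nabla) f) b w
          = (nabla1 DA nabla (pullback DA \<theta> 2 f b) + pullback DA \<theta> 1 f (dif DB b)) w"
  proof (cases "w \<in> grade DA 1")
    case w: True
    have \<theta>w: "\<theta> w \<in> grade DB 1" using dga_map_mem[OF T w] .
    have b\<theta>w: "b * \<theta> w \<in> grade DB 1" using dga_mult_mem[OF DB b \<theta>w] by simp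
    have dw: "dif DA w \<in> grade DA 2" using dga_dif_mem[OF DA w] by (simp add: numeral_2_eq_2)
    have "f (dif DB (b * \<theta> w)) 1 = f (dif DB b * \<theta> w + b * \<theta> (dif DA w)) 1"
      using dga_dif_mult[OF DB b] dga_map_dif[OF T] by simp
    also have "\<dots> = f (dif DB b * \<theta> w) 1 + f (b * \<theta> (dif DA w)) 1"
      using hom_add[OF f] dga_mult_mem[OF DB dga_dif_mem[OF DB b] \<theta>w]
        dga_mult_mem[OF DB b dga_map_mem[OF T dw]] by (simp add: numeral_2_eq_2)
    finally have f_d:
      "f (dif DB (b * \<theta> w)) 1 = f (dif DB b * \<theta> w) 1 + f (b * \<theta> (dif DA w)) 1" .
    have pullback_mult: "pullback DA \<theta> 1 f (b * \<theta> w) = homlmul DA 1 (pullback DA \<theta> 2 f b) w"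
      using dga_mult_mem[OF DA w, of _ 1]
      by (auto simp: pullback_def homlmul_def dga_map_mult[OF T] mult.assoc numeral_2_eq_2)
    have "induced_conn DA DB \<theta> nabla (homlmul DB 1 f (b * \<theta> w)) 1
            = nabla (homlmul DA 1 (pullback DA \<theta> 2 f b) w)"
      unfolding induced_conn_homlmul_one[OF DB T f b\<theta>w] pullback_mult ..
    then show ?thesis
      using w dw b\<theta>w f_d by (simp add: pullback_def nabla1_def algebra_simps)
  qed (simp add: pullback_def nabla1_def)
qed

lemma nabla1_induced_conn_dif:
  assumes DB: "is_dga DB" and T: "is_dga_map DA DB \<theta>"
    and f: "f \<in> hom DB P act 2" and b: "b \<in> grade DB 0"
  shows "nabla1 DB (induced_conn DA DB \<theta> nabla) f (dif DB b) 1 = nabla (pullback DA \<theta> 1 f (dif DB b))"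
  using dga_dif_mem[OF DB b] induced_conn_homlmul_one[OF DB T f] hom_zero[OF DB f]
  by (simp add: nabla1_def dga_dif_dif[OF DB])

theorem curvature_induced_conn:
  assumes DA: "is_dga DA" and DB: "is_dga DB" and T: "is_dga_map DA DB \<theta>"
    and R: "is_rmod DA M actM" and H: "is_hom_conn DA M actM nabla"
    and f: "f \<in> hom DB (homAB DA DB \<theta> M actM) (actAB DB) 2" and b: "b \<in> grade DB 0"
  shows "curvature DB (induced_conn DA DB \<theta> nabla) f b = curvature DA nabla (pullback DA \<theta> 2 f b)"
proof -
  have k: "pullback DA \<theta> 2 f b \<in> hom DA M actM 2"
    using pullback_hom[OF DA DB T _ b] f by simp
  have q: "pullback DA \<theta> 1 f (dif DB b) \<in> hom DA M actM 1"
    using pullback_hom[OF DA DB T _ dga_dif_mem[OF DB b]] f by (simp add: numeral_2_eq_2)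
  have "curvature DB (induced_conn DA DB \<theta> nabla) f b
          = nabla (nabla1 DA nabla (pullback DA \<theta> 2 f b) + pullback DA \<theta> 1 f (dif DB b))
            - nabla (pullback DA \<theta> 1 f (dif DB b))"
    using b pullback_nabla1_induced_conn[OF DA DB T f b] nabla1_induced_conn_dif[OF DB T f b]
    by (simp add: curvature_def induced_conn_eq)
  also have "\<dots> = curvature DA nabla (pullback DA \<theta> 2 f b)"
    using hom_conn_add[OF H nabla1_hom[OF DA R H k] q] by (simp add: curvature_def)
  finally show ?thesis .
qed

theorem flat_induced_conn:
  assumes DA: "is_dga DA" and DB: "is_dga DB" and T: "is_dga_map DA DB \<theta>"
    and R: "is_rmod DA M actM" and H: "is_hom_conn DA M actM nabla"
    and fl: "flat DA M actM nabla"
  shows "flat DB (homAB DA DB \<theta> M actM) (actAB DB) (induced_conn DA DB \<theta> nabla)"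
  unfolding flat_def
proof (intro ballI ext)
  fix f b assume f: "f \<in> hom DB (homAB DA DB \<theta> M actM) (actAB DB) 2"
  show "curvature DB (induced_conn DA DB \<theta> nabla) f b = 0 b"
  proof (cases "b \<in> grade DB 0")
    case b: True
    have "pullback DA \<theta> 2 f b \<in> hom DA M actM 2" using pullback_hom[OF DA DB T _ b] f by simp
    then show ?thesis
      using curvature_induced_conn[OF DA DB T R H f b] fl by (simp add: flat_def)
  qed (simp add: curvature_def induced_conn_def)
qed

theorem mainTheorem8:
  fixes DA :: "('k::field, 'a::ring_1) dga" and DB :: "('k, 'b::ring_1) dga"
    and \<theta> :: "'a \<Rightarrow> 'b" and M :: "'m::ab_group_add set" and actM :: "'m \<Rightarrow> 'a \<Rightarrow> 'm"
    and nabla :: "('a \<Rightarrow> 'm) \<Rightarrow> 'm"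
  assumes "is_dga DA" and "is_dga DB" and "is_dga_map DA DB \<theta>"
    and "is_rmod DA M actM" and "is_hom_conn DA M actM nabla"
  shows "(\<forall>f\<in>hom DB (homAB DA DB \<theta> M actM) (actAB DB) 2. \<forall>b\<in>grade DB 0.
            curvature DB (induced_conn DA DB \<theta> nabla) f b =
            curvature DA nabla (\<lambda>\<omega>. if \<omega> \<in> grade DA 2 then f (b * \<theta> \<omega>) 1 else 0))
       \<and> (flat DA M actM nabla \<longrightarrow>
            flat DB (homAB DA DB \<theta> M actM) (actAB DB) (induced_conn DA DB \<theta> nabla))"
  using curvature_induced_conn[OF assms] flat_induced_conn[OF assms]
  by (simp add: pullback_def)

end
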